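(* Let $A=[a_{ij}]$ be a symmetric $n\times n$ real matrix all of whose entries (including diagonal entries) lie in $\{1,-1\}$, and let $E(x_1,\dots,x_n)=\sum_{i=1}^n a_{ii}x_i^2+2\sum_{i<j}a_{ij}x_ix_j$. Then $E(x_1,\dots,x_n)\ge 0$ for all $(x_1,\dots,x_n)\in\mathbb{R}^n$ if and only if there exist $b_1,\dots,b_n\in\{1,-1\}$ such that $E(x_1,\dots,x_n)=(b_1x_1+b_2x_2+\dots+b_nx_n)^2$ for all $(x_1,\dots,x_n)\in\mathbb{R}^n$. *)

theory Defs
  imports Main "HOL.Real"
begin

definition quadE :: "nat \<Rightarrow> (nat \<Rightarrow> nat \<Rightarrow> real) \<Rightarrow> (nat \<Rightarrow> real) \<Rightarrow> real" where
  "quadE n A x = (\<Sum>i=1..n. A i i * (x i)\<^sup>2)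
     + 2 * (\<Sum>i=1..n. \<Sum>j=1..n. if i < j then A i j * x i * x j else 0)"

end

theory Submission
  imports Defs
begin

text \<open>A positive semidefinite symmetric sign matrix has unit diagonal, since its diagonal entries
  are values of the form and cannot be \<open>-1\<close>. For three distinct indices \<open>k, i, j\<close> with
  \<open>a = A k i\<close> and \<open>b = A k j\<close>, the form at \<open>e\<^sub>k - a e\<^sub>i - b e\<^sub>j\<close> equals \<open>2 a b A i j - 1\<close>,
  so \<open>A i j = a b\<close>. Hence \<open>A i j = b\<^sub>i b\<^sub>j\<close> with \<open>b\<^sub>i = A 1 i\<close>, and the form is
  \<open>(\<Sum> b\<^sub>i x\<^sub>i)\<^sup>2\<close>.\<close>

definition qform :: "'a set \<Rightarrow> ('a \<Rightarrow> 'a \<Rightarrow> real) \<Rightarrow> ('a \<Rightarrow> real) \<Rightarrow> real" where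
  "qform S A x = (\<Sum>i\<in>S. \<Sum>j\<in>S. A i j * x i * x j)"

lemma quadE_eq_qform:
  assumes sym: "\<forall>i\<in>{1..n}. \<forall>j\<in>{1..n}. A i j = A j i"
  shows "quadE n A x = qform {1..n} A x"
proof -
  let ?f = "\<lambda>i j. A i j * x i * x j"
  have split: "?f i j = (if i < j then ?f i j else 0) + (if j < i then ?f i j else 0)
       + (if i = j then ?f i j else 0)" for i j by auto
  have "qform {1..n} A x =
     (\<Sum>i\<in>{1..n}. \<Sum>j\<in>{1..n}. if i < j then ?f i j else 0)
   + (\<Sum>i\<in>{1..n}. \<Sum>j\<in>{1..n}. if j < i then ?f i j else 0)
   + (\<Sum>i\<in>{1..n}. \<Sum>j\<in>{1..n}. if i = j then ?f i j else 0)"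
    unfolding qform_def by (subst split) (simp add: sum.distrib)
  also have "(\<Sum>i\<in>{1..n}. \<Sum>j\<in>{1..n}. if j < i then ?f i j else 0)
      = (\<Sum>j\<in>{1..n}. \<Sum>i\<in>{1..n}. if j < i then ?f i j else 0)"
    by (rule sum.swap)
  also have "\<dots> = (\<Sum>i\<in>{1..n}. \<Sum>j\<in>{1..n}. if i < j then ?f i j else 0)"
    using sym by (intro sum.cong refl) (auto simp: mult_ac)
  also have "(\<Sum>i\<in>{1..n}. \<Sum>j\<in>{1..n}. if i = j then ?f i j else 0)
      = (\<Sum>i=1..n. A i i * (x i)\<^sup>2)"
    by (simp add: power2_eq_square mult_ac)
  finally show ?thesis unfolding quadE_def by simp
qed

lemma qform_restrict_support:
  assumes "finite S" "T \<subseteq> S" "\<forall>k\<in>S - T. x k = 0"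
  shows "qform S A x = qform T A x"
proof -
  have "qform S A x = (\<Sum>i\<in>S. \<Sum>j\<in>T. A i j * x i * x j)"
    unfolding qform_def using assms
    by (intro sum.cong refl sum.mono_neutral_right) (auto intro: finite_subset)
  also have "\<dots> = qform T A x"
    unfolding qform_def using assms
    by (intro sum.mono_neutral_right) (auto intro: finite_subset)
  finally show ?thesis .
qed

lemma qform_nonneg_diag:
  assumes "finite S" "i \<in> S" "\<forall>x. qform S A x \<ge> 0"
  shows "A i i \<ge> 0"
proof -
  define x where "x = (\<lambda>k. if k = i then (1::real) else 0)"
  have "qform S A x = qform {i} A x"
    using assms by (intro qform_restrict_support) (auto simp: x_def)
  also have "\<dots> = A i i"
    by (simp add: qform_def x_def)
  finally show ?thesis
    using assms(3) by metis
qed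

lemma sign_qform_nonneg_unit_diag:
  assumes "finite S" "\<forall>x. qform S A x \<ge> 0" "\<forall>i\<in>S. \<forall>j\<in>S. A i j \<in> {1, -1}" "i \<in> S"
  shows "A i i = 1"
  using qform_nonneg_diag[of S i A] assms by force

lemma sign_qform_nonneg_triple:
  assumes fin: "finite S" and psd: "\<forall>x. qform S A x \<ge> 0"
    and sym: "\<forall>i\<in>S. \<forall>j\<in>S. A i j = A j i"
    and entries: "\<forall>i\<in>S. \<forall>j\<in>S. A i j \<in> {1, -1}"
    and S: "k \<in> S" "i \<in> S" "j \<in> S" and distinct: "k \<noteq> i" "k \<noteq> j" "i \<noteq> j"
  shows "A i j = A k i * A k j"
proof -
  define a where "a = A k i"
  define b where "b = A k j"
  define x where "x = (\<lambda>l. if l = k then 1 else if l = i then - a else if l = j then - b else 0)"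
  have unit_diag: "A l l = 1" if "l \<in> S" for l
    using sign_qform_nonneg_unit_diag[OF fin psd entries that] .
  have signs: "a \<in> {1, -1}" "b \<in> {1, -1}" "A i j \<in> {1, -1}"
    using entries S by (auto simp: a_def b_def)
  then have squares: "a * a = 1" "b * b = 1"
    by auto
  have entries_at: "A k i = a" "A i k = a" "A k j = b" "A j k = b" "A j i = A i j"
    "A k k = 1" "A i i = 1" "A j j = 1"
    using sym unit_diag S by (auto simp: a_def b_def)
  have x_at: "x k = 1" "x i = - a" "x j = - b"
    using distinct by (simp_all add: x_def)
  have "qform S A x = qform {k, i, j} A x"
    using S fin by (intro qform_restrict_support) (auto simp: x_def)
  also have "\<dots> = 1 - a * a - b * b + 2 * A i j * a * b"
    using distinct by (simp add: qform_def x_at entries_at algebra_simps)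
  also have "\<dots> = 2 * A i j * a * b - 1"
    by (simp add: squares)
  finally have "0 \<le> 2 * A i j * a * b - 1"
    using psd by metis
  with signs show ?thesis
    unfolding a_def[symmetric] b_def[symmetric] by auto
qed

lemma sign_qform_nonneg_rank_one:
  assumes fin: "finite S" and psd: "\<forall>x. qform S A x \<ge> 0"
    and sym: "\<forall>i\<in>S. \<forall>j\<in>S. A i j = A j i"
    and entries: "\<forall>i\<in>S. \<forall>j\<in>S. A i j \<in> {1, -1}"
    and S: "k \<in> S" "i \<in> S" "j \<in> S"
  shows "A i j = A k i * A k j"
proof -
  have unit_diag: "A l l = 1" if "l \<in> S" for l
    using sign_qform_nonneg_unit_diag[OF fin psd entries that] .
  consider "i = j" | "i \<noteq> j" "k = i" | "i \<noteq> j" "k = j" | "k \<noteq> i" "k \<noteq> j" "i \<noteq> j"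
    by blast
  then show ?thesis
  proof cases
    case 1
    then show ?thesis using unit_diag entries S by force
  next
    case 2
    then show ?thesis using unit_diag S by simp
  next
    case 3
    then show ?thesis using unit_diag sym S by simp
  next
    case 4
    then show ?thesis using sign_qform_nonneg_triple[OF assms] by blast
  qed
qed

lemma qform_rank_one:
  assumes "\<forall>i\<in>S. \<forall>j\<in>S. A i j = b i * b j"
  shows "qform S A x = (\<Sum>i\<in>S. b i * x i)\<^sup>2"
proof -
  have "qform S A x = (\<Sum>i\<in>S. \<Sum>j\<in>S. (b i * x i) * (b j * x j))"
    unfolding qform_def using assms by (intro sum.cong refl) (simp add: mult_ac)
  also have "\<dots> = (\<Sum>i\<in>S. b i * x i)\<^sup>2"
    by (simp add: power2_eq_square sum_product)
  finally show ?thesis .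
qed

theorem mainTheorem3:
  fixes n :: nat and A :: "nat \<Rightarrow> nat \<Rightarrow> real"
  assumes sym: "\<forall>i\<in>{1..n}. \<forall>j\<in>{1..n}. A i j = A j i"
    and entries: "\<forall>i\<in>{1..n}. \<forall>j\<in>{1..n}. A i j \<in> {1, -1}"
  shows "(\<forall>x :: nat \<Rightarrow> real. quadE n A x \<ge> 0) \<longleftrightarrow>
         (\<exists>b :: nat \<Rightarrow> real. (\<forall>i\<in>{1..n}. b i \<in> {1, -1}) \<and>
            (\<forall>x :: nat \<Rightarrow> real. quadE n A x = (\<Sum>i=1..n. b i * x i)\<^sup>2))"
    (is "?psd \<longleftrightarrow> (\<exists>b. ?signs b \<and> ?square b)")
proof
  assume psd: ?psd
  show "\<exists>b. ?signs b \<and> ?square b"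
  proof (cases "n = 0")
    case True
    then show ?thesis
      by (intro exI[of _ "\<lambda>_. 1"]) (simp add: quadE_def)
  next
    case False
    then have one: "1 \<in> {1..n}"
      by simp
    have "\<forall>x. qform {1..n} A x \<ge> 0"
      using psd quadE_eq_qform[OF sym] by metis
    then have "\<forall>i\<in>{1..n}. \<forall>j\<in>{1..n}. A i j = A 1 i * A 1 j"
      using sign_qform_nonneg_rank_one[OF finite_atLeastAtMost _ sym entries one] by blast
    then have "?square (A 1)"
      unfolding quadE_eq_qform[OF sym] by (intro allI qform_rank_one)
    moreover have "?signs (A 1)"
      using entries one by blast
    ultimately show ?thesis
      by blast
  qed
next
  assume "\<exists>b. ?signs b \<and> ?square b"
  then show ?psd
    by (metis zero_le_power2)
qed

end
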